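(* Let $\ell$, $x\le y$, $n=y-x$, $\lambda\in\mathbb{R}$ be such that $\inf_{t\in[0,1],\,x\le z\le y-1}\Xi_\ell(t,z)\ge\lambda$, and let $1\le i\le n$. Then the functions $$s\mapsto\frac{\int_{\Delta^{0,s}_{1,i-1}}\exp\big(\xi_{1,i-1}(\mathbf t_{1,i-1})\big)\,d\mathbf t_{1,i-1}}{\int_{\Delta^{0,s}_{1,i-1}}\exp\big(\lambda\sum_{j=1}^{i-1}t_j\big)\,d\mathbf t_{1,i-1}} \quad\text{and}\quad s\mapsto\frac{\int_{\Delta^{s,1}_{i+1,n}}\exp\big(\xi_{i+1,n}(\mathbf t_{i+1,n})\big)\,d\mathbf t_{i+1,n}}{\int_{\Delta^{s,1}_{i+1,n}}\exp\big(\lambda\sum_{j=i+1}^{n}t_j\big)\,d\mathbf t_{i+1,n}}$$ are non-decreasing in $s$ (on $(0,1)$, for those $i$ for which the respective integrals are over a nonempty set of variables).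
   Context: $\ell:[0,1]\times\mathbb{N}\to(0,\infty)$ is the jump intensity of a Markov counting process, with $t\mapsto\ell(t,z)$ continuously differentiable on $[0,1]$ for each $z$. The reciprocal characteristic is $\Xi_\ell(t,z)=\partial_t\log\ell(t,z)+\ell(t,z+1)-\ell(t,z)$. For $1\le j\le n$, $\xi_j:[0,1]\to\mathbb{R}$ is the primitive of $t\mapsto\Xi_\ell(t,x+j-1)$ with $\xi_j(0)=0$, and for $i\le k$, $\xi_{i,k}(\mathbf t_{i,k})=\sum_{j=i}^k\xi_j(t_j)$, where $\mathbf t_{i,k}=(t_i,\dots,t_k)$. For $0\le s\le r\le1$, $\Delta^{s,r}_{i,k}=\{(t_i,\dots,t_k):s<t_i<t_{i+1}<\dots<t_k<r\}$. *)

theory Defs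
  imports "HOL-Analysis.Analysis"
begin

definition Xi :: "(real \<Rightarrow> nat \<Rightarrow> real) \<Rightarrow> real \<Rightarrow> nat \<Rightarrow> real" where
  "Xi l t z = vector_derivative (\<lambda>s. ln (l s z)) (at t within {0..1})
              + l t (Suc z) - l t z"

definition xi :: "(real \<Rightarrow> nat \<Rightarrow> real) \<Rightarrow> nat \<Rightarrow> nat \<Rightarrow> real \<Rightarrow> real" where
  "xi l x j t = integral {0..t} (\<lambda>u. Xi l u (x + j - 1))"

definition xi_sum :: "(real \<Rightarrow> nat \<Rightarrow> real) \<Rightarrow> nat \<Rightarrow> nat \<Rightarrow> nat \<Rightarrow> (nat \<Rightarrow> real) \<Rightarrow> real" where
  "xi_sum l x i k t = (\<Sum>j=i..k. xi l x j (t j))"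

definition open_simplex :: "real \<Rightarrow> real \<Rightarrow> nat \<Rightarrow> nat \<Rightarrow> (nat \<Rightarrow> real) set" where
  "open_simplex s r i k = {t. (\<forall>j\<in>{i..k}. s < t j \<and> t j < r) \<and>
                         (\<forall>j. i \<le> j \<and> j < k \<longrightarrow> t j < t (Suc j))}"

abbreviation leb_on :: "nat \<Rightarrow> nat \<Rightarrow> (nat \<Rightarrow> real) measure" where
  "leb_on i k \<equiv> PiM {i..k} (\<lambda>_. lborel)"

end

theory Submission
  imports Defs
begin

(* Both integrals are nested one-dimensional integrals of product weights, peeled off at the
   last (resp. first) coordinate. The bound Xi \<ge> lam says that exp xi_j(t) / exp(lam t) is
   non-decreasing, i.e. the weights phi = exp xi_j and psi = exp(lam t) satisfy the cross
   inequality phi(y) psi(y') \<le> phi(y') psi(y) for y \<le> y'. Integrating over nested intervals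
   preserves this inequality (split (0,s') into (0,s) and [s,s') and compare the pieces), so by
   induction on the number of coordinates it holds for the simplex integrals themselves, which
   is the monotonicity of their ratio. *)

lemma open_simplex_upd_last:
  assumes "a \<le> Suc b"
  shows "x(Suc b := y) \<in> open_simplex s r a (Suc b) \<longleftrightarrow> s < y \<and> y < r \<and> x \<in> open_simplex s y a b"
proof
  assume x: "x(Suc b := y) \<in> open_simplex s r a (Suc b)"
  then have "s < y \<and> y < r"
    using assms by (auto simp: open_simplex_def dest!: bspec[of _ _ "Suc b"])
  moreover have "x j < y" if "j \<in> {a..b}" for j
    using lift_Suc_mono_less_ivl[of "{a..<Suc b}" "x(Suc b := y)" j "Suc b"] x that
    by (auto simp: open_simplex_def split: if_splits)
  moreover have "s < x j" if "j \<in> {a..b}" for j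
    using x that by (auto simp: open_simplex_def dest!: bspec[of _ _ j])
  moreover have "x j < x (Suc j)" if "a \<le> j" "j < b" for j
    using x that by (auto simp: open_simplex_def dest!: spec[of _ j])
  ultimately show "s < y \<and> y < r \<and> x \<in> open_simplex s y a b"
    by (auto simp: open_simplex_def)
next
  assume "s < y \<and> y < r \<and> x \<in> open_simplex s y a b"
  then have y: "s < y" "y < r" and inner: "\<And>j. j \<in> {a..b} \<Longrightarrow> s < x j \<and> x j < y"
    and chain: "\<And>j. a \<le> j \<Longrightarrow> j < b \<Longrightarrow> x j < x (Suc j)"
    by (auto simp: open_simplex_def)
  show "x(Suc b := y) \<in> open_simplex s r a (Suc b)"
    unfolding open_simplex_def
  proof (intro CollectI conjI ballI allI impI)
    fix j assume "j \<in> {a..Suc b}"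
    then show "s < (x(Suc b := y)) j" "(x(Suc b := y)) j < r"
      using inner[of j] y by (cases "j = Suc b"; auto)+
  next
    fix j assume "a \<le> j \<and> j < Suc b"
    then show "(x(Suc b := y)) j < (x(Suc b := y)) (Suc j)"
      using inner[of j] chain[of j] by (cases "j = b") auto
  qed
qed

lemma open_simplex_upd_first:
  assumes "a \<le> b"
  shows "x(a := y) \<in> open_simplex s r a b \<longleftrightarrow> s < y \<and> y < r \<and> x \<in> open_simplex y r (Suc a) b"
proof
  assume x: "x(a := y) \<in> open_simplex s r a b"
  then have "s < y \<and> y < r"
    using assms by (auto simp: open_simplex_def dest!: bspec[of _ _ a])
  moreover have "y < x j" if "j \<in> {Suc a..b}" for j
    using lift_Suc_mono_less_ivl[of "{a..<b}" "x(a := y)" a j] x that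
    by (auto simp: open_simplex_def split: if_splits)
  moreover have "x j < r" if "j \<in> {Suc a..b}" for j
    using x that by (auto simp: open_simplex_def dest!: bspec[of _ _ j])
  moreover have "x j < x (Suc j)" if "Suc a \<le> j" "j < b" for j
    using x that by (auto simp: open_simplex_def dest!: spec[of _ j])
  ultimately show "s < y \<and> y < r \<and> x \<in> open_simplex y r (Suc a) b"
    by (auto simp: open_simplex_def)
next
  assume "s < y \<and> y < r \<and> x \<in> open_simplex y r (Suc a) b"
  then have y: "s < y" "y < r" and inner: "\<And>j. j \<in> {Suc a..b} \<Longrightarrow> y < x j \<and> x j < r"
    and chain: "\<And>j. Suc a \<le> j \<Longrightarrow> j < b \<Longrightarrow> x j < x (Suc j)"
    by (auto simp: open_simplex_def)
  show "x(a := y) \<in> open_simplex s r a b"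
    unfolding open_simplex_def
  proof (intro CollectI conjI ballI allI impI)
    fix j assume "j \<in> {a..b}"
    then show "s < (x(a := y)) j" "(x(a := y)) j < r"
      using inner[of j] y by (cases "j = a"; auto)+
  next
    fix j assume "a \<le> j \<and> j < b"
    then show "(x(a := y)) j < (x(a := y)) (Suc j)"
      using inner[of "Suc j"] chain[of j] by (cases "j = a") auto
  qed
qed

definition simplex_prod_integral ::
    "(nat \<Rightarrow> real \<Rightarrow> real) \<Rightarrow> real \<Rightarrow> real \<Rightarrow> nat \<Rightarrow> nat \<Rightarrow> ennreal" where
  "simplex_prod_integral \<phi> s r a b =
     (\<integral>\<^sup>+t. indicator (open_simplex s r a b) t * ennreal (\<Prod>j\<in>{a..b}. \<phi> j (t j)) \<partial>leb_on a b)"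

lemma pred_open_simplex[measurable]:
  assumes [measurable]: "f \<in> borel_measurable M" "g \<in> borel_measurable M"
    "h \<in> measurable M (leb_on a b)"
  shows "Measurable.pred M (\<lambda>x. h x \<in> open_simplex (f x) (g x) a b)"
proof -
  have [measurable]: "(\<lambda>x. h x j) \<in> borel_measurable M" if "j \<in> {a..b}" for j
    using measurable_compose[OF assms(3) measurable_component_singleton[OF that]] by simp
  have "open_simplex s r a b = {t. (\<forall>j\<in>{a..b}. s < t j \<and> t j < r) \<and> (\<forall>j\<in>{a..<b}. t j < t (Suc j))}"
    for s r by (auto simp: open_simplex_def)
  then show ?thesis
    by simp measurable
qed

lemma measurable_simplex_prod_integral[measurable]:
  assumes [measurable]: "\<And>j. \<phi> j \<in> borel_measurable borel"
    "f \<in> borel_measurable M" "g \<in> borel_measurable M"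
  shows "(\<lambda>x. simplex_prod_integral \<phi> (f x) (g x) a b) \<in> borel_measurable M"
proof -
  interpret finite_product_sigma_finite "\<lambda>_. lborel" "{a..b}" by standard auto
  have [measurable]: "(\<lambda>t. \<Prod>j\<in>{a..b}. \<phi> j (t j)) \<in> borel_measurable (leb_on a b)"
    by measurable
  show ?thesis
    unfolding simplex_prod_integral_def by measurable
qed

lemma simplex_prod_integral_empty: "b < a \<Longrightarrow> simplex_prod_integral \<phi> s r a b = 1"
  by (simp add: simplex_prod_integral_def open_simplex_def PiM_empty)

lemma simplex_prod_integral_mono:
  "s' \<le> s \<Longrightarrow> r \<le> r' \<Longrightarrow> simplex_prod_integral \<phi> s r a b \<le> simplex_prod_integral \<phi> s' r' a b"
  unfolding simplex_prod_integral_def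
  by (intro nn_integral_mono mult_right_mono) (auto simp: indicator_def open_simplex_def)

lemma simplex_prod_integral_peel_last:
  assumes [measurable]: "\<And>j. \<phi> j \<in> borel_measurable borel"
    and nonneg: "\<And>j t. 0 \<le> \<phi> j t" and "a \<le> Suc b"
  shows "simplex_prod_integral \<phi> s r a (Suc b) =
    (\<integral>\<^sup>+y. indicator {s<..<r} y * (ennreal (\<phi> (Suc b) y) * simplex_prod_integral \<phi> s y a b)
      \<partial>lborel)"
proof -
  interpret product_sigma_finite "\<lambda>_. lborel" by standard
  let ?f = "\<lambda>t. indicator (open_simplex s r a (Suc b)) t * ennreal (\<Prod>j\<in>{a..Suc b}. \<phi> j (t j))"
  have ins: "{a..Suc b} = insert (Suc b) {a..b}"
    using assms(3) by auto
  have "?f \<in> borel_measurable (leb_on a (Suc b))"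
    by measurable
  then have "simplex_prod_integral \<phi> s r a (Suc b) =
      (\<integral>\<^sup>+y. \<integral>\<^sup>+x. ?f (x(Suc b := y)) \<partial>leb_on a b \<partial>lborel)"
    unfolding simplex_prod_integral_def ins by (intro product_nn_integral_insert_rev) auto
  also have "\<dots> = (\<integral>\<^sup>+y. \<integral>\<^sup>+x. (indicator {s<..<r} y * ennreal (\<phi> (Suc b) y)) *
      (indicator (open_simplex s y a b) x * ennreal (\<Prod>j\<in>{a..b}. \<phi> j (x j))) \<partial>leb_on a b \<partial>lborel)"
  proof (intro nn_integral_cong)
    fix x y
    have prod: "(\<Prod>j\<in>{a..Suc b}. \<phi> j ((x(Suc b := y)) j)) = \<phi> (Suc b) y * (\<Prod>j\<in>{a..b}. \<phi> j (x j))"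
      unfolding ins by (auto intro!: prod.cong)
    then show "?f (x(Suc b := y)) = (indicator {s<..<r} y * ennreal (\<phi> (Suc b) y)) *
        (indicator (open_simplex s y a b) x * ennreal (\<Prod>j\<in>{a..b}. \<phi> j (x j)))"
      unfolding indicator_def prod open_simplex_upd_last[OF assms(3)]
      using nonneg by (auto simp: ennreal_mult prod_nonneg)
  qed
  also have "\<dots> = (\<integral>\<^sup>+y. indicator {s<..<r} y * (ennreal (\<phi> (Suc b) y) * simplex_prod_integral \<phi> s y a b) \<partial>lborel)"
    unfolding simplex_prod_integral_def by (subst nn_integral_cmult) (auto simp: mult.assoc)
  finally show ?thesis .
qed

lemma simplex_prod_integral_peel_first:
  assumes [measurable]: "\<And>j. \<phi> j \<in> borel_measurable borel"
    and nonneg: "\<And>j t. 0 \<le> \<phi> j t" and "a \<le> b"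
  shows "simplex_prod_integral \<phi> s r a b =
    (\<integral>\<^sup>+y. indicator {s<..<r} y * (ennreal (\<phi> a y) * simplex_prod_integral \<phi> y r (Suc a) b)
      \<partial>lborel)"
proof -
  interpret product_sigma_finite "\<lambda>_. lborel" by standard
  let ?f = "\<lambda>t. indicator (open_simplex s r a b) t * ennreal (\<Prod>j\<in>{a..b}. \<phi> j (t j))"
  have ins: "{a..b} = insert a {Suc a..b}"
    using assms(3) by auto
  have "?f \<in> borel_measurable (leb_on a b)"
    by measurable
  then have "simplex_prod_integral \<phi> s r a b =
      (\<integral>\<^sup>+y. \<integral>\<^sup>+x. ?f (x(a := y)) \<partial>leb_on (Suc a) b \<partial>lborel)"
    unfolding simplex_prod_integral_def ins by (intro product_nn_integral_insert_rev) auto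
  also have "\<dots> = (\<integral>\<^sup>+y. \<integral>\<^sup>+x. (indicator {s<..<r} y * ennreal (\<phi> a y)) *
      (indicator (open_simplex y r (Suc a) b) x * ennreal (\<Prod>j\<in>{Suc a..b}. \<phi> j (x j))) \<partial>leb_on (Suc a) b \<partial>lborel)"
  proof (intro nn_integral_cong)
    fix x y
    have prod: "(\<Prod>j\<in>{a..b}. \<phi> j ((x(a := y)) j)) = \<phi> a y * (\<Prod>j\<in>{Suc a..b}. \<phi> j (x j))"
      unfolding ins by (auto intro!: prod.cong)
    then show "?f (x(a := y)) = (indicator {s<..<r} y * ennreal (\<phi> a y)) *
        (indicator (open_simplex y r (Suc a) b) x * ennreal (\<Prod>j\<in>{Suc a..b}. \<phi> j (x j)))"
      unfolding indicator_def prod open_simplex_upd_first[OF assms(3)]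
      using nonneg by (auto simp: ennreal_mult prod_nonneg)
  qed
  also have "\<dots> = (\<integral>\<^sup>+y. indicator {s<..<r} y * (ennreal (\<phi> a y) * simplex_prod_integral \<phi> y r (Suc a) b) \<partial>lborel)"
    unfolding simplex_prod_integral_def by (subst nn_integral_cmult) (auto simp: mult.assoc)
  finally show ?thesis .
qed

lemma nn_integral_indicator_cross:
  fixes F G :: "'a \<Rightarrow> ennreal"
  assumes [measurable]: "F \<in> borel_measurable M" "G \<in> borel_measurable M" "A \<in> sets M" "B \<in> sets M"
    and "A \<subseteq> B"
    and FG: "\<And>y y'. y \<in> A \<Longrightarrow> y' \<in> B - A \<Longrightarrow> F y * G y' \<le> F y' * G y"
  shows "(\<integral>\<^sup>+y. indicator A y * F y \<partial>M) * (\<integral>\<^sup>+y. indicator B y * G y \<partial>M)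
       \<le> (\<integral>\<^sup>+y. indicator B y * F y \<partial>M) * (\<integral>\<^sup>+y. indicator A y * G y \<partial>M)"
proof -
  define I where "I S H = (\<integral>\<^sup>+y. indicator S y * H y \<partial>M)" for S H
  have split: "I B H = I A H + I (B - A) H" if [measurable]: "H \<in> borel_measurable M" for H
  proof -
    have "indicator B y * H y = indicator A y * H y + indicator (B - A) y * H y" for y
      using \<open>A \<subseteq> B\<close> by (auto simp: indicator_def)
    then show ?thesis
      unfolding I_def by (simp add: nn_integral_add)
  qed
  have "I A F * I (B - A) G = (\<integral>\<^sup>+y'. I A F * (indicator (B - A) y' * G y') \<partial>M)"
    unfolding I_def by (subst nn_integral_cmult) auto
  also have "\<dots> = (\<integral>\<^sup>+y'. \<integral>\<^sup>+y. indicator A y * F y * (indicator (B - A) y' * G y') \<partial>M \<partial>M)"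
    unfolding I_def by (intro nn_integral_cong, subst nn_integral_multc) auto
  also have "\<dots> \<le> (\<integral>\<^sup>+y'. \<integral>\<^sup>+y. indicator (B - A) y' * F y' * (indicator A y * G y) \<partial>M \<partial>M)"
    using FG by (intro nn_integral_mono) (auto simp: indicator_def mult_ac)
  also have "\<dots> = (\<integral>\<^sup>+y'. indicator (B - A) y' * F y' * I A G \<partial>M)"
    unfolding I_def by (intro nn_integral_cong, subst nn_integral_cmult) auto
  also have "\<dots> = I (B - A) F * I A G"
    unfolding I_def by (subst nn_integral_multc) auto
  finally have cross: "I A F * I (B - A) G \<le> I (B - A) F * I A G" .
  have "I A F * I B G = I A F * I A G + I A F * I (B - A) G"
    by (simp add: split distrib_left)
  also have "\<dots> \<le> I A F * I A G + I (B - A) F * I A G"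
    using cross by (rule add_left_mono)
  also have "\<dots> = I B F * I A G"
    by (simp add: split distrib_right)
  finally show ?thesis
    unfolding I_def .
qed

lemma ennreal_mult_cross_mono:
  fixes p q p' q' u v u' v' :: ennreal
  assumes "p * q' \<le> p' * q" "u * v' \<le> u' * v"
  shows "(p * u) * (q' * v') \<le> (p' * u') * (q * v)"
proof -
  have "(p * u) * (q' * v') = (p * q') * (u * v')"
    by (simp add: mult_ac)
  also have "\<dots> \<le> (p' * q) * (u' * v)"
    using assms by (rule mult_mono) auto
  also have "\<dots> = (p' * u') * (q * v)"
    by (simp add: mult_ac)
  finally show ?thesis .
qed

lemma simplex_prod_integral_cross_upper:
  assumes [measurable]: "\<And>j. \<phi> j \<in> borel_measurable borel" "\<And>j. \<psi> j \<in> borel_measurable borel"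
    and nonneg: "\<And>j t. 0 \<le> \<phi> j t" "\<And>j t. 0 \<le> \<psi> j t" and "1 \<le> a"
    and ratio: "\<And>j y y'. j \<in> {a..b} \<Longrightarrow> s < y \<Longrightarrow> y \<le> y' \<Longrightarrow> y' < r' \<Longrightarrow>
      \<phi> j y * \<psi> j y' \<le> \<phi> j y' * \<psi> j y"
    and "r \<le> r'"
  shows "simplex_prod_integral \<phi> s r a b * simplex_prod_integral \<psi> s r' a b
       \<le> simplex_prod_integral \<phi> s r' a b * simplex_prod_integral \<psi> s r a b"
  using ratio \<open>r \<le> r'\<close>
proof (induction b arbitrary: r r')
  \<comment> \<open>With 1 \<le> a the base case b = 0 is the empty simplex, so only the last index is ever peeled.\<close>
  case 0
  then show ?case
    using \<open>1 \<le> a\<close> by (simp add: simplex_prod_integral_empty)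
next
  case (Suc b)
  show ?case
  proof (cases "a \<le> Suc b")
    case False
    then show ?thesis by (simp add: simplex_prod_integral_empty)
  next
    case True
    define F where "F y = ennreal (\<phi> (Suc b) y) * simplex_prod_integral \<phi> s y a b" for y
    define G where "G y = ennreal (\<psi> (Suc b) y) * simplex_prod_integral \<psi> s y a b" for y
    have peel: "simplex_prod_integral \<phi> s q a (Suc b) = (\<integral>\<^sup>+y. indicator {s<..<q} y * F y \<partial>lborel)"
      "simplex_prod_integral \<psi> s q a (Suc b) = (\<integral>\<^sup>+y. indicator {s<..<q} y * G y \<partial>lborel)" for q
      unfolding F_def G_def using True nonneg by (simp_all add: simplex_prod_integral_peel_last)
    have "F y * G y' \<le> F y' * G y" if "y \<in> {s<..<r}" "y' \<in> {s<..<r'} - {s<..<r}" for y y'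
    proof -
      have "y \<le> y'"
        using that by auto
      show ?thesis
        unfolding F_def G_def
      proof (rule ennreal_mult_cross_mono)
      show "ennreal (\<phi> (Suc b) y) * ennreal (\<psi> (Suc b) y') \<le> ennreal (\<phi> (Suc b) y') * ennreal (\<psi> (Suc b) y)"
        using Suc.prems(1)[of "Suc b" y y'] that True nonneg \<open>y \<le> y'\<close>
        by (simp flip: ennreal_mult add: ennreal_leI)
      show "simplex_prod_integral \<phi> s y a b * simplex_prod_integral \<psi> s y' a b
          \<le> simplex_prod_integral \<phi> s y' a b * simplex_prod_integral \<psi> s y a b"
        using that Suc.prems by (intro Suc.IH) auto
      qed
    qed
    then show ?thesis
      unfolding peel F_def G_def using \<open>r \<le> r'\<close>
      by (intro nn_integral_indicator_cross) auto
  qed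
qed

lemma simplex_prod_integral_cross_lower:
  assumes [measurable]: "\<And>j. \<phi> j \<in> borel_measurable borel" "\<And>j. \<psi> j \<in> borel_measurable borel"
    and nonneg: "\<And>j t. 0 \<le> \<phi> j t" "\<And>j t. 0 \<le> \<psi> j t"
    and ratio: "\<And>j y y'. j \<in> {a..b} \<Longrightarrow> s < y \<Longrightarrow> y \<le> y' \<Longrightarrow> y' < r \<Longrightarrow>
      \<phi> j y * \<psi> j y' \<le> \<phi> j y' * \<psi> j y"
    and "s \<le> s'"
  shows "simplex_prod_integral \<phi> s r a b * simplex_prod_integral \<psi> s' r a b
       \<le> simplex_prod_integral \<phi> s' r a b * simplex_prod_integral \<psi> s r a b"
  using ratio \<open>s \<le> s'\<close>
proof (induction "Suc b - a" arbitrary: a s s')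
  case 0
  then show ?case by (simp add: simplex_prod_integral_empty)
next
  case (Suc d)
  show ?case
  proof (cases "a \<le> b")
    case False
    then show ?thesis by (simp add: simplex_prod_integral_empty)
  next
    case True
    define F where "F y = ennreal (\<phi> a y) * simplex_prod_integral \<phi> y r (Suc a) b" for y
    define G where "G y = ennreal (\<psi> a y) * simplex_prod_integral \<psi> y r (Suc a) b" for y
    have peel: "simplex_prod_integral \<phi> q r a b = (\<integral>\<^sup>+y. indicator {q<..<r} y * F y \<partial>lborel)"
      "simplex_prod_integral \<psi> q r a b = (\<integral>\<^sup>+y. indicator {q<..<r} y * G y \<partial>lborel)" for q
      unfolding F_def G_def using True nonneg by (simp_all add: simplex_prod_integral_peel_first)
    have "G y * F y' \<le> G y' * F y" if "y \<in> {s'<..<r}" "y' \<in> {s<..<r} - {s'<..<r}" for y y'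
    proof -
      have "y' \<le> y"
        using that by auto
      show ?thesis
        unfolding F_def G_def
      proof (rule ennreal_mult_cross_mono)
      show "ennreal (\<psi> a y) * ennreal (\<phi> a y') \<le> ennreal (\<psi> a y') * ennreal (\<phi> a y)"
        using Suc.prems(1)[of a y' y] that True nonneg \<open>y' \<le> y\<close>
        by (simp flip: ennreal_mult add: ennreal_leI mult.commute)
      show "simplex_prod_integral \<psi> y r (Suc a) b * simplex_prod_integral \<phi> y' r (Suc a) b
          \<le> simplex_prod_integral \<psi> y' r (Suc a) b * simplex_prod_integral \<phi> y r (Suc a) b"
        using that Suc.prems Suc.hyps(2) \<open>s \<le> s'\<close>
        by (subst (1 2) mult.commute) (intro Suc.hyps(1); auto)
      qed
    qed
    then have "simplex_prod_integral \<psi> s' r a b * simplex_prod_integral \<phi> s r a b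
             \<le> simplex_prod_integral \<psi> s r a b * simplex_prod_integral \<phi> s' r a b"
      unfolding peel F_def G_def using \<open>s \<le> s'\<close>
      by (intro nn_integral_indicator_cross) auto
    then show ?thesis
      by (simp add: mult.commute)
  qed
qed

lemma simplex_prod_integral_finite:
  assumes [measurable]: "\<And>j. \<phi> j \<in> borel_measurable borel"
    and nonneg: "\<And>j t. 0 \<le> \<phi> j t" and cont: "\<And>j. continuous_on {s..r} (\<phi> j)"
  shows "simplex_prod_integral \<phi> s r a b < \<infinity>"
proof (induction "Suc b - a" arbitrary: a)
  case 0
  then show ?case by (simp add: simplex_prod_integral_empty)
next
  case (Suc d)
  show ?case
  proof (cases "a \<le> b")
    case False
    then show ?thesis by (simp add: simplex_prod_integral_empty)
  next
    case True
    obtain M where M: "\<And>y. y \<in> {s..r} \<Longrightarrow> \<bar>\<phi> a y\<bar> \<le> M"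
      using compact_imp_bounded[OF compact_continuous_image[OF cont[of a] compact_Icc]]
      unfolding bounded_real by (metis image_eqI)
    have "simplex_prod_integral \<phi> s r a b =
        (\<integral>\<^sup>+y. indicator {s<..<r} y * (ennreal (\<phi> a y) * simplex_prod_integral \<phi> y r (Suc a) b)
      \<partial>lborel)"
      using True nonneg by (simp add: simplex_prod_integral_peel_first)
    also have "\<dots> \<le> (\<integral>\<^sup>+y. ennreal M * simplex_prod_integral \<phi> s r (Suc a) b * indicator {s<..<r} y \<partial>lborel)"
      using M[THEN abs_le_D1] by (intro nn_integral_mono)
        (auto simp: indicator_def intro!: mult_mono ennreal_leI simplex_prod_integral_mono)
    also have "\<dots> = ennreal M * simplex_prod_integral \<phi> s r (Suc a) b * emeasure lborel {s<..<r}"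
      by (simp add: nn_integral_cmult_indicator)
    also have "\<dots> < \<infinity>"
    proof -
      have "simplex_prod_integral \<phi> s r (Suc a) b < \<infinity>"
        using Suc.hyps by (intro Suc.hyps(1)) linarith
      moreover have "emeasure lborel {s<..<r} < \<infinity>"
        by (cases "s \<le> r") auto
      ultimately show ?thesis
        by (simp add: ennreal_mult_less_top)
    qed
    finally show ?thesis .
  qed
qed

lemma simplex_prod_integral_pos:
  assumes [measurable]: "\<And>j. \<phi> j \<in> borel_measurable borel"
    and nonneg: "\<And>j t. 0 \<le> \<phi> j t" and cont: "\<And>j. continuous_on {s..r} (\<phi> j)"
    and pos: "\<And>j y. y \<in> {s..r} \<Longrightarrow> 0 < \<phi> j y" and "s < r"
  shows "0 < simplex_prod_integral \<phi> s r a b"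
  using cont pos \<open>s < r\<close>
proof (induction "Suc b - a" arbitrary: a s)
  case 0
  then show ?case by (simp add: simplex_prod_integral_empty)
next
  case (Suc d)
  show ?case
  proof (cases "a \<le> b")
    case False
    then show ?thesis by (simp add: simplex_prod_integral_empty)
  next
    case True
    define c where "c = (s + r) / 2"
    have c: "s < c" "c < r"
      using \<open>s < r\<close> by (auto simp: c_def)
    obtain y0 where "y0 \<in> {s..r}" and min: "\<And>y. y \<in> {s..r} \<Longrightarrow> \<phi> a y0 \<le> \<phi> a y"
      using continuous_attains_inf[OF compact_Icc _ Suc.prems(1)[of a]] \<open>s < r\<close>
      by (metis atLeastAtMost_iff empty_iff less_le_not_le nle_le)
    define m where "m = \<phi> a y0"
    have m: "0 < m" "\<And>y. y \<in> {s..r} \<Longrightarrow> m \<le> \<phi> a y"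
      using Suc.prems(2)[OF \<open>y0 \<in> {s..r}\<close>] min by (auto simp: m_def)
    have "0 < simplex_prod_integral \<phi> c r (Suc a) b"
      using Suc.hyps(2) Suc.prems c
      by (intro Suc.hyps(1)) (auto intro: continuous_on_subset[OF Suc.prems(1)])
    then have "0 < ennreal m * simplex_prod_integral \<phi> c r (Suc a) b * emeasure lborel {s<..<c}"
      using m c by (simp add: ennreal_zero_less_mult_iff)
    also have "\<dots> = (\<integral>\<^sup>+y. ennreal m * simplex_prod_integral \<phi> c r (Suc a) b * indicator {s<..<c} y \<partial>lborel)"
      by (simp add: nn_integral_cmult_indicator)
    also have "\<dots> \<le> (\<integral>\<^sup>+y. indicator {s<..<r} y * (ennreal (\<phi> a y) * simplex_prod_integral \<phi> y r (Suc a) b) \<partial>lborel)"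
      using m c by (intro nn_integral_mono)
        (auto simp: indicator_def intro!: mult_mono ennreal_leI simplex_prod_integral_mono)
    also have "\<dots> = simplex_prod_integral \<phi> s r a b"
      using True nonneg by (simp add: simplex_prod_integral_peel_first)
    finally show ?thesis .
  qed
qed

lemma enn2real_ratio_le:
  fixes F G F' G' :: ennreal
  assumes "F * G' \<le> F' * G" "F' < \<infinity>" "G < \<infinity>" "G' < \<infinity>" "0 < G" "0 < G'"
  shows "enn2real F / enn2real G \<le> enn2real F' / enn2real G'"
proof -
  have "enn2real F * enn2real G' \<le> enn2real F' * enn2real G"
    using assms by (simp flip: enn2real_mult add: enn2real_mono ennreal_mult_less_top)
  moreover have "0 < enn2real G" "0 < enn2real G'"
    using assms by (auto simp: enn2real_positive_iff)
  ultimately show ?thesis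
    by (simp add: divide_simps mult.commute)
qed

lemma simplex_prod_integral_ratio_mono_upper:
  assumes meas: "\<And>j. \<phi> j \<in> borel_measurable borel" "\<And>j. \<psi> j \<in> borel_measurable borel"
    and nonneg: "\<And>j t. 0 \<le> \<phi> j t" "\<And>j t. 0 \<le> \<psi> j t"
    and cont: "\<And>j. continuous_on {s..h} (\<phi> j)" "\<And>j. continuous_on {s..h} (\<psi> j)"
    and pos: "\<And>j y. y \<in> {s..h} \<Longrightarrow> 0 < \<psi> j y" and "1 \<le> a"
    and ratio: "\<And>j y y'. j \<in> {a..b} \<Longrightarrow> s < y \<Longrightarrow> y \<le> y' \<Longrightarrow> y' < h \<Longrightarrow>
      \<phi> j y * \<psi> j y' \<le> \<phi> j y' * \<psi> j y"
  shows "mono_on {s<..<h}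
    (\<lambda>r. enn2real (simplex_prod_integral \<phi> s r a b) / enn2real (simplex_prod_integral \<psi> s r a b))"
proof (rule mono_onI)
  fix r r' assume r: "r \<in> {s<..<h}" "r' \<in> {s<..<h}" "r \<le> r'"
  have cont_sub: "continuous_on {s..q} (\<phi> j)" "continuous_on {s..q} (\<psi> j)" if "q \<in> {s<..<h}" for q j
    using that by (auto intro: continuous_on_subset[OF cont(1)] continuous_on_subset[OF cont(2)])
  have fin: "simplex_prod_integral \<phi> s q a b < \<infinity>" "simplex_prod_integral \<psi> s q a b < \<infinity>"
    if "q \<in> {s<..<h}" for q
    using that by (intro simplex_prod_integral_finite meas nonneg cont_sub; simp)+
  have pos': "0 < simplex_prod_integral \<psi> s q a b" if "q \<in> {s<..<h}" for q
    using that pos by (intro simplex_prod_integral_pos meas nonneg cont_sub) auto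
  show "enn2real (simplex_prod_integral \<phi> s r a b) / enn2real (simplex_prod_integral \<psi> s r a b)
      \<le> enn2real (simplex_prod_integral \<phi> s r' a b) / enn2real (simplex_prod_integral \<psi> s r' a b)"
  proof (rule enn2real_ratio_le)
    show "simplex_prod_integral \<phi> s r a b * simplex_prod_integral \<psi> s r' a b
        \<le> simplex_prod_integral \<phi> s r' a b * simplex_prod_integral \<psi> s r a b"
      using r meas ratio nonneg \<open>1 \<le> a\<close> by (intro simplex_prod_integral_cross_upper) auto
  qed (use r fin pos' in auto)
qed

lemma simplex_prod_integral_ratio_mono_lower:
  assumes meas: "\<And>j. \<phi> j \<in> borel_measurable borel" "\<And>j. \<psi> j \<in> borel_measurable borel"
    and nonneg: "\<And>j t. 0 \<le> \<phi> j t" "\<And>j t. 0 \<le> \<psi> j t"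
    and cont: "\<And>j. continuous_on {h..r} (\<phi> j)" "\<And>j. continuous_on {h..r} (\<psi> j)"
    and pos: "\<And>j y. y \<in> {h..r} \<Longrightarrow> 0 < \<psi> j y"
    and ratio: "\<And>j y y'. j \<in> {a..b} \<Longrightarrow> h < y \<Longrightarrow> y \<le> y' \<Longrightarrow> y' < r \<Longrightarrow>
      \<phi> j y * \<psi> j y' \<le> \<phi> j y' * \<psi> j y"
  shows "mono_on {h<..<r}
    (\<lambda>s. enn2real (simplex_prod_integral \<phi> s r a b) / enn2real (simplex_prod_integral \<psi> s r a b))"
proof (rule mono_onI)
  fix s s' assume s: "s \<in> {h<..<r}" "s' \<in> {h<..<r}" "s \<le> s'"
  have cont_sub: "continuous_on {q..r} (\<phi> j)" "continuous_on {q..r} (\<psi> j)" if "q \<in> {h<..<r}" for q j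
    using that by (auto intro: continuous_on_subset[OF cont(1)] continuous_on_subset[OF cont(2)])
  have fin: "simplex_prod_integral \<phi> q r a b < \<infinity>" "simplex_prod_integral \<psi> q r a b < \<infinity>"
    if "q \<in> {h<..<r}" for q
    using that by (intro simplex_prod_integral_finite meas nonneg cont_sub; simp)+
  have pos': "0 < simplex_prod_integral \<psi> q r a b" if "q \<in> {h<..<r}" for q
    using that pos by (intro simplex_prod_integral_pos meas nonneg cont_sub) auto
  show "enn2real (simplex_prod_integral \<phi> s r a b) / enn2real (simplex_prod_integral \<psi> s r a b)
      \<le> enn2real (simplex_prod_integral \<phi> s' r a b) / enn2real (simplex_prod_integral \<psi> s' r a b)"
  proof (rule enn2real_ratio_le)
    show "simplex_prod_integral \<phi> s r a b * simplex_prod_integral \<psi> s' r a b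
        \<le> simplex_prod_integral \<phi> s' r a b * simplex_prod_integral \<psi> s r a b"
      using s meas ratio nonneg by (intro simplex_prod_integral_cross_lower) auto
  qed (use s fin pos' in auto)
qed

lemma set_integral_open_simplex_prod:
  assumes [measurable]: "\<And>j. \<phi> j \<in> borel_measurable borel" and nonneg: "\<And>j t. 0 \<le> \<phi> j t"
    and eq: "\<And>t. t \<in> open_simplex s r a b \<Longrightarrow> f t = (\<Prod>j\<in>{a..b}. \<phi> j (t j))"
  shows "(LINT t : open_simplex s r a b | leb_on a b. f t) = enn2real (simplex_prod_integral \<phi> s r a b)"
proof -
  have "(LINT t : open_simplex s r a b | leb_on a b. f t)
      = (LINT t | leb_on a b. indicator (open_simplex s r a b) t * (\<Prod>j\<in>{a..b}. \<phi> j (t j)))"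
    unfolding set_lebesgue_integral_def using eq by (intro Bochner_Integration.integral_cong) (auto simp: indicator_def)
  also have "\<dots> = enn2real (\<integral>\<^sup>+t. ennreal (indicator (open_simplex s r a b) t * (\<Prod>j\<in>{a..b}. \<phi> j (t j))) \<partial>leb_on a b)"
    using nonneg by (intro integral_eq_nn_integral) (auto intro!: AE_I2 mult_nonneg_nonneg prod_nonneg)
  also have "\<dots> = enn2real (simplex_prod_integral \<phi> s r a b)"
    unfolding simplex_prod_integral_def
    by (intro arg_cong[where f=enn2real] nn_integral_cong) (auto simp: indicator_def)
  finally show ?thesis .
qed

lemma mono_on_cong: "mono_on A f \<Longrightarrow> (\<And>x. x \<in> A \<Longrightarrow> f x = g x) \<Longrightarrow> mono_on A g"
  by (simp add: monotone_on_def)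

lemma continuous_on_Xi:
  fixes l :: "real \<Rightarrow> nat \<Rightarrow> real"
  assumes pos: "\<And>t z. 0 < l t z"
    and diff: "\<And>t z. t \<in> {0..1} \<Longrightarrow> (\<lambda>s. l s z) differentiable (at t within {0..1})"
    and cont_deriv: "\<And>z. continuous_on {0..1} (\<lambda>t. vector_derivative (\<lambda>s. l s z) (at t within {0..1}))"
  shows "continuous_on {0..1} (\<lambda>t. Xi l t z)"
proof -
  define D where "D t = vector_derivative (\<lambda>s. l s z) (at t within {0..1})" for t
  have l_cont: "continuous_on {0..1} (\<lambda>t. l t w)" for w
    using diff by (auto simp: continuous_on_eq_continuous_within intro: differentiable_imp_continuous_within)
  have Xi_eq: "Xi l t z = D t / l t z + l t (Suc z) - l t z" if t: "t \<in> {0..1}" for t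
  proof -
    have "((\<lambda>s. l s z) has_real_derivative D t) (at t within {0..1})"
      unfolding D_def has_real_derivative_iff_has_vector_derivative
      using diff[OF t] vector_derivative_works by blast
    from DERIV_chain2[OF DERIV_ln[OF pos] this]
    have "((\<lambda>s. ln (l s z)) has_vector_derivative D t / l t z) (at t within {0..1})"
      by (simp add: has_real_derivative_iff_has_vector_derivative divide_inverse mult.commute)
    then show ?thesis
      using vector_derivative_within_closed_interval[of 0 1 t] t by (simp add: Xi_def)
  qed
  have "continuous_on {0..1} (\<lambda>t. D t / l t z + l t (Suc z) - l t z)"
    using cont_deriv[of z] l_cont pos unfolding D_def
    by (intro continuous_intros) (auto simp: less_imp_neq[symmetric])
  then show ?thesis
    by (rule continuous_on_eq) (simp add: Xi_eq)
qed

lemma continuous_on_xi: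
  "continuous_on {0..1} (\<lambda>t. Xi l t (x + j - 1)) \<Longrightarrow> continuous_on {0..1} (xi l x j)"
  unfolding xi_def[abs_def]
  using indefinite_integral_continuous_1[OF integrable_continuous_real] by simp

lemma exp_xi_ratio_mono:
  assumes cont: "continuous_on {0..1} (\<lambda>t. Xi l t (x + j - 1))"
    and bound: "\<And>t. t \<in> {0..1} \<Longrightarrow> lam \<le> Xi l t (x + j - 1)"
    and y: "0 \<le> y" "y \<le> y'" "y' \<le> 1"
  shows "exp (xi l x j y) * exp (lam * y') \<le> exp (xi l x j y') * exp (lam * y)"
proof -
  have int: "(\<lambda>t. Xi l t (x + j - 1)) integrable_on {0..y'}"
    by (rule integrable_on_subinterval[OF integrable_continuous_real[OF cont]]) (use y in auto)
  have "xi l x j y' = xi l x j y + integral {y..y'} (\<lambda>t. Xi l t (x + j - 1))"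
    unfolding xi_def using Henstock_Kurzweil_Integration.integral_combine[OF y(1,2) int] by simp
  moreover have "integral {y..y'} (\<lambda>_. lam) \<le> integral {y..y'} (\<lambda>t. Xi l t (x + j - 1))"
    using y by (intro integral_le integrable_on_subinterval[OF int] bound) auto
  ultimately show ?thesis
    using y by (simp flip: exp_add add: algebra_simps)
qed

theorem lemma3p4:
  fixes l :: "real \<Rightarrow> nat \<Rightarrow> real" and x y n i :: nat and lam :: real
  assumes pos: "\<And>t z. 0 < l t z"
    and diff: "\<And>t z. t \<in> {0..1} \<Longrightarrow> (\<lambda>s. l s z) differentiable (at t within {0..1})"
    and cont_deriv: "\<And>z. continuous_on {0..1}
                          (\<lambda>t. vector_derivative (\<lambda>s. l s z) (at t within {0..1}))"
    and xy: "x \<le> y"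
    and n_def: "n = y - x"
    and bound: "\<And>t z. t \<in> {0..1} \<Longrightarrow> x \<le> z \<Longrightarrow> z < y \<Longrightarrow> lam \<le> Xi l t z"
    and i: "1 \<le> i" "i \<le> n"
  shows "mono_on {0<..<1} (\<lambda>s.
            (LINT t : open_simplex 0 s 1 (i - 1) | leb_on 1 (i - 1). exp (xi_sum l x 1 (i - 1) t))
          / (LINT t : open_simplex 0 s 1 (i - 1) | leb_on 1 (i - 1). exp (lam * (\<Sum>j=1..i - 1. t j))))
        \<and> mono_on {0<..<1} (\<lambda>s.
            (LINT t : open_simplex s 1 (i + 1) n | leb_on (i + 1) n. exp (xi_sum l x (i + 1) n t))
          / (LINT t : open_simplex s 1 (i + 1) n | leb_on (i + 1) n. exp (lam * (\<Sum>j=i + 1..n. t j))))"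
proof -
  \<comment> \<open>Clamping makes the weight continuous on all of \<real>, hence Borel; on [0,1] it is exp xi_j.\<close>
  define \<phi> where "\<phi> j t = exp (xi l x j (clamp 0 1 t))" for j t
  define \<psi> where "\<psi> (j :: nat) t = exp (lam * t)" for j t
  have Xi_cont: "continuous_on {0..1} (\<lambda>t. Xi l t z)" for z
    using pos diff cont_deriv by (rule continuous_on_Xi)
  have cont: "continuous_on UNIV (\<phi> j)" "continuous_on UNIV (\<psi> j)" for j
    unfolding \<phi>_def \<psi>_def using continuous_on_xi[OF Xi_cont]
    by (auto intro!: continuous_intros clamp_continuous_on simp: cbox_interval)
  have meas: "\<phi> j \<in> borel_measurable borel" "\<psi> j \<in> borel_measurable borel" for j
    using cont by (auto intro: borel_measurable_continuous_onI)
  have ratio: "\<phi> j t * \<psi> j t' \<le> \<phi> j t' * \<psi> j t" if "j \<in> {1..n}" "0 < t" "t \<le> t'" "t' < 1" for j t t'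
    unfolding \<phi>_def \<psi>_def using that xy n_def
    by (auto simp: cbox_interval intro!: exp_xi_ratio_mono Xi_cont bound)
  have xi_prod: "exp (xi_sum l x a b t) = (\<Prod>j\<in>{a..b}. \<phi> j (t j))"
    if "t \<in> open_simplex s r a b" "0 \<le> s" "r \<le> 1" for a b t s r
    using that by (auto simp: xi_sum_def exp_sum \<phi>_def open_simplex_def cbox_interval intro!: prod.cong)
  have lam_prod: "exp (lam * (\<Sum>j=a..b. t j)) = (\<Prod>j\<in>{a..b}. \<psi> j (t j))" for a b t
    by (simp add: \<psi>_def sum_distrib_left exp_sum)
  have xi_int: "(LINT t : open_simplex s r a b | leb_on a b. exp (xi_sum l x a b t))
      = enn2real (simplex_prod_integral \<phi> s r a b)" if "0 \<le> s" "r \<le> 1" for s r a b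
    using that by (intro set_integral_open_simplex_prod meas xi_prod) (auto simp: \<phi>_def)
  have lam_int: "(LINT t : open_simplex s r a b | leb_on a b. exp (lam * (\<Sum>j=a..b. t j)))
      = enn2real (simplex_prod_integral \<psi> s r a b)" for s r a b
    by (intro set_integral_open_simplex_prod meas lam_prod) (auto simp: \<psi>_def)
  have lower: "mono_on {0<..<1} (\<lambda>s. enn2real (simplex_prod_integral \<phi> 0 s 1 (i - 1))
      / enn2real (simplex_prod_integral \<psi> 0 s 1 (i - 1)))"
    using meas cont ratio i by (intro simplex_prod_integral_ratio_mono_upper)
      (auto simp: \<phi>_def \<psi>_def intro: continuous_on_subset)
  have upper: "mono_on {0<..<1} (\<lambda>s. enn2real (simplex_prod_integral \<phi> s 1 (i + 1) n)
      / enn2real (simplex_prod_integral \<psi> s 1 (i + 1) n))"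
    using meas cont ratio i by (intro simplex_prod_integral_ratio_mono_lower)
      (auto simp: \<phi>_def \<psi>_def intro: continuous_on_subset)
  show ?thesis
    by (rule conjI[OF mono_on_cong[OF lower] mono_on_cong[OF upper]]) (auto simp: xi_int lam_int)
qed

end
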